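(* Let $G$ be a discrete probability measure on $\Theta$ whose support is a finite set $\{\theta^*_1,\ldots,\theta^*_k\}\subset\Theta$ with $k\ge 1$. For every $n\ge 1$ let $G^{(n)}$ be the level $n$ SBA approximation of $G$. Then $G^{(n)}=G$ for every $n\ge k$.
   Context: $\Theta\subseteq\mathbb{R}$ is either $\mathbb{R}$, a closed half-line, or a compact interval with nonempty interior, with its Borel $\sigma$-field. A probability measure $G$ on $\Theta$ is identified with its distribution function $G(t)=G(\Theta\cap(-\infty,t])$. For $a_1\le a_2$ (endpoints allowed to be $\inf\Theta$ or $\sup\Theta$), the $G$-barycenter of $(a_1,a_2]$ is $b_G(a_1,a_2]=\frac{\int_{(a_1,a_2]}\theta\,dG(\theta)}{G(a_2)-G(a_1)}$ if $G(a_2)>G(a_1)$, and $b_G(a_1,a_2]=a_1$ if $G(a_2)=G(a_1)$. For $G$ with finite first moment, its sequential barycenter array (SBA) $\{\mu_{j,l}: j\ge1,\ 1\le l\le 2^j-1\}$ is defined by $\mu_{1,1}=\int_\Theta\theta\,dG(\theta)$ and, for $j\ge 2$: $\mu_{j,2l}=\mu_{j-1,l}$ for $1\le l\le 2^{j-1}-1$, and $\mu_{j,2l-1}=b_G(\mu_{j-1,l-1},\mu_{j-1,l}]$ for $1\le l\le 2^{j-1}$, with the convention $\mu_{j,0}=\inf\Theta$, $\mu_{j,2^j}=\sup\Theta$ for all $j$. The level $n$ intervals are $\Theta_{n,1}=[\mu_{n,0},\mu_{n,1}]$ if $\mu_{n,0}>-\infty$ and $(\mu_{n,0},\mu_{n,1}]$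 otherwise; $\Theta_{n,l}=(\mu_{n,l-1},\mu_{n,l}]$ for $2\le l\le 2^n-1$; $\Theta_{n,2^n}=(\mu_{n,2^n-1},\mu_{n,2^n}]$ if $\mu_{n,2^n}<\infty$ and $(\mu_{n,2^n-1},\infty)$ otherwise. The level $n$ SBA approximation of $G$ is the discrete measure $G^{(n)}=\sum_{l=1}^{2^n}G(\Theta_{n,l})\,\delta_{\mu_{n+1,2l-1}}$.
   Formalization: For l = 1, $\mu_{j,2l-1}$ is the G-barycenter of the closed cell $[\mu_{j-1,0},\mu_{j-1,1}]$, so an atom at a finite $\inf\Theta$ is included, in place of $b_G(\mu_{j-1,0},\mu_{j-1,1}]$. The paper assumes this as well. *)

theory Defs
  imports "HOL-Probability.Probability"
begin

definition admissible_domain :: "real set \<Rightarrow> bool" where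
  "admissible_domain T \<longleftrightarrow>
     T = UNIV \<or> (\<exists>a. T = {a..} \<or> T = {..a}) \<or> (\<exists>a b. a < b \<and> T = {a..b})"

text \<open>Level cells determined by an array m (m 0 = inf T, m (2^n) = sup T, extended reals).
  Cell 1 is [m 0, m 1] (intersected with T); cell l >= 2 is (m (l-1), m l].\<close>
definition sba_cell :: "real set \<Rightarrow> (nat \<Rightarrow> ereal) \<Rightarrow> nat \<Rightarrow> real set" where
  "sba_cell T m l =
     (if l = 1 then {\<theta>\<in>T. ereal \<theta> \<le> m 1}
      else {\<theta>\<in>T. m (l - 1) < ereal \<theta> \<and> ereal \<theta> \<le> m l})"

text \<open>G-barycenter of a cell I with left endpoint a (returned if I has G-mass zero).\<close>
definition sba_bary :: "real measure \<Rightarrow> real set \<Rightarrow> ereal \<Rightarrow> ereal" where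
  "sba_bary M I a =
     (if measure M I > 0 then ereal ((LINT \<theta>:I|M. \<theta>) / measure M I) else a)"

text \<open>Sequential barycenter array: sba M T j l = mu_{j,l} for 0 <= l <= 2^j
  (level 0 is the pair inf T, sup T).\<close>
fun sba :: "real measure \<Rightarrow> real set \<Rightarrow> nat \<Rightarrow> nat \<Rightarrow> ereal" where
  "sba M T 0 l = (if l = 0 then Inf (ereal ` T) else Sup (ereal ` T))"
| "sba M T (Suc j) l =
     (if even l then sba M T j (l div 2)
      else sba_bary M (sba_cell T (sba M T j) (Suc l div 2)) (sba M T j (l div 2)))"

text \<open>Level n SBA approximation, as a set function:
  G^(n)(A) = sum_{l=1}^{2^n} G(Theta_{n,l}) * delta_{mu_{n+1,2l-1}}(A).\<close>
definition sba_approx :: "real measure \<Rightarrow> real set \<Rightarrow> nat \<Rightarrow> real set \<Rightarrow> real" where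
  "sba_approx M T n A =
     (\<Sum>l\<in>{1..2^n}. measure M (sba_cell T (sba M T n) l)
                      * indicator (ereal ` A) (sba M T (Suc n) (2 * l - 1)))"

end

theory Submission
  imports Defs
begin

(* Every cell of the array carrying at least two atoms has its barycenter strictly between its
   smallest and its largest atom, so both cells into which that barycenter splits it carry fewer
   atoms than the parent.  Hence from level k = card S on every cell carries at most one atom.
   The barycenter of a cell with a single atom is that atom, and a cell without atoms has
   G-mass 0, so the cell l contributes exactly G(Theta_{n,l} \<inter> A) to G^(n)(A); since the
   cells partition T, these contributions add up to G(A). *)

lemma Min_less_Max_if_card_ge_2:
  fixes X :: "'a :: linorder set"
  assumes "finite X" "2 \<le> card X"
  shows "Min X < Max X"
proof (rule ccontr)
  assume "\<not> Min X < Max X"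
  have "X \<subseteq> {Min X}"
  proof
    fix x assume "x \<in> X"
    then have "Min X \<le> x" "x \<le> Max X"
      using assms(1) by (simp_all add: Min_le Max_ge)
    with \<open>\<not> Min X < Max X\<close> show "x \<in> {Min X}"
      by (simp add: antisym not_less)
  qed
  then have "card X \<le> card {Min X}"
    by (intro card_mono) simp_all
  with assms(2) show False
    by simp
qed

lemma weighted_mean_bounds:
  fixes X :: "real set" and w :: "real \<Rightarrow> real"
  assumes fin: "finite X" and ne: "X \<noteq> {}" and w: "\<And>x. x \<in> X \<Longrightarrow> w x > 0"
  defines "\<mu> \<equiv> (\<Sum>x\<in>X. x * w x) / (\<Sum>x\<in>X. w x)"
  shows "Min X \<le> \<mu>" and "\<mu> \<le> Max X"
    and "2 \<le> card X \<Longrightarrow> Min X < \<mu>" and "2 \<le> card X \<Longrightarrow> \<mu> < Max X"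
proof -
  have W: "(\<Sum>x\<in>X. w x) > 0"
    using fin ne w by (intro sum_pos) auto
  have lower: "Min X * w x \<le> x * w x" and upper: "x * w x \<le> Max X * w x" if "x \<in> X" for x
    using that fin w[OF that] by (auto intro!: mult_right_mono)
  have Min_eq: "Min X * (\<Sum>x\<in>X. w x) = (\<Sum>x\<in>X. Min X * w x)"
   and Max_eq: "Max X * (\<Sum>x\<in>X. w x) = (\<Sum>x\<in>X. Max X * w x)"
    by (simp_all add: sum_distrib_left)
  show "Min X \<le> \<mu>"
    unfolding \<mu>_def using W Min_eq sum_mono[OF lower] by (simp add: pos_le_divide_eq)
  show "\<mu> \<le> Max X"
    unfolding \<mu>_def using W Max_eq sum_mono[OF upper] by (simp add: pos_divide_le_eq)
  assume "2 \<le> card X"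
  with fin have lt: "Min X < Max X"
    by (rule Min_less_Max_if_card_ge_2)
  have extremes: "Min X \<in> X" "Max X \<in> X"
    using fin ne by simp_all
  have "Min X * w (Max X) < Max X * w (Max X)" "Min X * w (Min X) < Max X * w (Min X)"
    using lt extremes w by simp_all
  then have "(\<Sum>x\<in>X. Min X * w x) < (\<Sum>x\<in>X. x * w x)"
    and "(\<Sum>x\<in>X. x * w x) < (\<Sum>x\<in>X. Max X * w x)"
    using extremes lower upper by (auto intro!: sum_strict_mono_ex1[OF fin])
  then show "Min X < \<mu>" "\<mu> < Max X"
    unfolding \<mu>_def using W Min_eq Max_eq by (simp_all add: pos_less_divide_eq pos_divide_less_eq)
qed

lemma card_le_max_1_if_loses_element:
  assumes "finite X" "Y \<subseteq> X" "2 \<le> card X \<Longrightarrow> \<exists>x\<in>X. x \<notin> Y"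
  shows "card Y \<le> max 1 (card X - 1)"
proof (cases "2 \<le> card X")
  case True
  then obtain x where x: "x \<in> X" "Y \<subseteq> X - {x}"
    using assms(2,3) by blast
  then have "card Y \<le> card (X - {x})"
    using assms(1) by (intro card_mono) simp_all
  also have "\<dots> = card X - 1"
    using x(1) assms(1) by simp
  finally show ?thesis
    by simp
next
  case False
  moreover have "card Y \<le> card X"
    using assms(1,2) by (rule card_mono)
  ultimately show ?thesis
    by simp
qed

lemma sba_first: "sba M T j 0 = Inf (ereal ` T)"
  by (induction j) simp_all

lemma sba_last: "sba M T j (2 ^ j) = Sup (ereal ` T)"
  by (induction j) simp_all

lemma sba_Suc_odd:
  "sba M T (Suc j) (Suc (2 * i)) = sba_bary M (sba_cell T (sba M T j) (Suc i)) (sba M T j i)"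
  by simp

lemma mem_sba_cell_bounds:
  assumes "m 0 = Inf (ereal ` T)" "x \<in> sba_cell T m (Suc i)"
  shows "m i \<le> ereal x" "ereal x \<le> m (Suc i)"
  using assms by (cases i; auto simp: sba_cell_def Inf_lower)+

lemma sba_cell_split:
  assumes "m' (2 * i) = m i" "m' (Suc (Suc (2 * i))) = m (Suc i)"
    and "m i \<le> m' (Suc (2 * i))" "m' (Suc (2 * i)) \<le> m (Suc i)"
  shows "sba_cell T m' (Suc (2 * i)) \<subseteq> sba_cell T m (Suc i) \<inter> {\<theta>. ereal \<theta> \<le> m' (Suc (2 * i))}"
    and "sba_cell T m' (Suc (Suc (2 * i))) \<subseteq> sba_cell T m (Suc i) \<inter> {\<theta>. m' (Suc (2 * i)) < ereal \<theta>}"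
  using assms by (auto simp: sba_cell_def intro: order_trans le_less_trans)

lemma sum_indicator_sba_cell:
  assumes "1 \<le> N" "\<And>l. l < N \<Longrightarrow> m l \<le> m (Suc l)" "x \<in> T"
  shows "(\<Sum>l=1..N. indicator (sba_cell T m l) x) = (indicator {\<theta>. ereal \<theta> \<le> m N} x :: real)"
  using assms(1,2)
proof (induction N rule: dec_induct)
  case base
  then show ?case
    using assms(3) by (simp add: sba_cell_def indicator_def)
next
  case (step N)
  have "(\<Sum>l=1..Suc N. indicator (sba_cell T m l) x)
      = indicator {\<theta>. ereal \<theta> \<le> m N} x + (indicator (sba_cell T m (Suc N)) x :: real)"
    using step.hyps step.IH step.prems by simp
  also have "\<dots> = indicator {\<theta>. ereal \<theta> \<le> m (Suc N)} x"
  proof (cases "ereal x \<le> m N")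
    case True
    moreover have "m N \<le> m (Suc N)"
      using step.prems step.hyps(2) by simp
    ultimately show ?thesis
      using step.hyps(1) by (auto simp: sba_cell_def indicator_def)
  next
    case False
    then show ?thesis
      using step.hyps(1) assms(3) by (auto simp: sba_cell_def indicator_def)
  qed
  finally show ?case .
qed

locale finite_atomic_prob = prob_space M for M :: "real measure" +
  fixes T S :: "real set"
  assumes sets_M: "sets M = sets (restrict_space borel T)"
    and finite_S: "finite S" and S_subset: "S \<subseteq> T" and prob_S: "prob S = 1"
    and prob_atom_pos: "\<And>x. x \<in> S \<Longrightarrow> prob {x} > 0"
begin

lemma space_M: "space M = T"
  using sets_eq_imp_space_eq[OF sets_M] by (simp add: space_restrict_space)

lemma Int_borel_in_sets: "B \<in> sets borel \<Longrightarrow> T \<inter> B \<in> sets M"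
  unfolding sets_M sets_restrict_space by blast

lemma sba_cell_in_sets: "sba_cell T m l \<in> sets M"
proof (cases "l = 1")
  case True
  have "sba_cell T m l = T \<inter> {\<theta>. ereal \<theta> \<le> m 1}"
    using True by (auto simp: sba_cell_def)
  also have "\<dots> \<in> sets M"
    by (intro Int_borel_in_sets) measurable
  finally show ?thesis .
next
  case False
  have "sba_cell T m l = T \<inter> {\<theta>. m (l - 1) < ereal \<theta> \<and> ereal \<theta> \<le> m l}"
    using False by (auto simp: sba_cell_def)
  also have "\<dots> \<in> sets M"
    by (intro Int_borel_in_sets) measurable
  finally show ?thesis .
qed

lemma atoms_in_sets: "x \<in> S \<Longrightarrow> {x} \<in> sets M"
  using Int_borel_in_sets[of "{x}"] S_subset by auto

lemma id_borel_measurable: "(\<lambda>\<theta>. \<theta>) \<in> borel_measurable M"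
  unfolding measurable_cong_sets[OF sets_M refl]
  by (intro measurable_restrict_space1 measurable_ident_sets refl)

lemma AE_in_S: "AE x in M. x \<in> S"
  using AE_prob_1[OF prob_S] .

lemma S_in_sets: "S \<in> sets M"
proof -
  have "S \<in> sets borel"
    using finite_S by (simp add: borel_closed finite_imp_closed)
  then have "T \<inter> S \<in> sets M"
    by (rule Int_borel_in_sets)
  then show ?thesis
    using S_subset by (simp add: Int_absorb1)
qed

lemma prob_eq_sum_atoms:
  assumes "C \<in> sets M"
  shows "prob C = (\<Sum>x\<in>S \<inter> C. prob {x})"
proof -
  have "prob C = prob (S \<inter> C)"
    using assms S_in_sets AE_in_S by (intro measure_eq_AE) auto
  also have "\<dots> = (\<Sum>x\<in>S \<inter> C. prob {x})"
    using finite_S atoms_in_sets by (intro finite_measure_eq_sum_singleton) auto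
  finally show ?thesis .
qed

lemma set_integral_id_eq_sum_atoms:
  assumes "C \<in> sets M"
  shows "(LINT \<theta>:C|M. \<theta>) = (\<Sum>x\<in>S \<inter> C. x * prob {x})"
proof -
  have "(LINT \<theta>:C|M. \<theta>) = (LINT \<theta>:S \<inter> C|M. \<theta>)"
    using assms S_in_sets AE_in_S
    by (intro set_integral_cong_set)
      (auto simp: set_borel_measurable_def intro!: borel_measurable_times id_borel_measurable)
  also have "\<dots> = (\<integral>\<theta>. \<theta> * indicator (S \<inter> C) \<theta> \<partial>M)"
    by (simp add: set_lebesgue_integral_def mult.commute)
  also have "\<dots> = (\<Sum>x\<in>S \<inter> C. x * prob {x})"
    using finite_S atoms_in_sets
    by (intro integral_indicator_finite_real) (auto simp: less_top[symmetric])
  finally show ?thesis .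
qed

lemma sba_bary_eq_weighted_mean:
  assumes "C \<in> sets M" "S \<inter> C \<noteq> {}"
  shows "sba_bary M C a = ereal ((\<Sum>x\<in>S \<inter> C. x * prob {x}) / (\<Sum>x\<in>S \<inter> C. prob {x}))"
proof -
  have "prob C > 0"
    unfolding prob_eq_sum_atoms[OF assms(1)]
    using assms(2) finite_S prob_atom_pos by (intro sum_pos) auto
  then show ?thesis
    using assms by (simp add: sba_bary_def prob_eq_sum_atoms set_integral_id_eq_sum_atoms)
qed

lemma sba_bary_no_atoms:
  assumes "C \<in> sets M" "S \<inter> C = {}"
  shows "sba_bary M C a = a"
  using assms by (simp add: sba_bary_def prob_eq_sum_atoms)

lemma sba_bary_between:
  assumes "C \<in> sets M" "lo \<le> hi" "\<And>x. x \<in> S \<inter> C \<Longrightarrow> lo \<le> ereal x \<and> ereal x \<le> hi"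
  shows "lo \<le> sba_bary M C lo \<and> sba_bary M C lo \<le> hi"
proof (cases "S \<inter> C = {}")
  case True
  then show ?thesis
    using assms by (simp add: sba_bary_no_atoms)
next
  case False
  let ?X = "S \<inter> C"
  have fin: "finite ?X"
    using finite_S by simp
  have w: "\<And>x. x \<in> ?X \<Longrightarrow> prob {x} > 0"
    using prob_atom_pos by blast
  let ?\<mu> = "(\<Sum>x\<in>?X. x * prob {x}) / (\<Sum>x\<in>?X. prob {x})"
  have "lo \<le> ereal (Min ?X)" "ereal (Max ?X) \<le> hi"
    using assms(3) Min_in[OF fin False] Max_in[OF fin False] by blast+
  moreover have "ereal (Min ?X) \<le> ereal ?\<mu>" "ereal ?\<mu> \<le> ereal (Max ?X)"
    using weighted_mean_bounds(1,2)[where w="\<lambda>x. prob {x}", OF fin False w] by simp_all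
  ultimately show ?thesis
    unfolding sba_bary_eq_weighted_mean[OF assms(1) False] by (meson order_trans)
qed

lemma sba_bary_splits_atoms:
  assumes "C \<in> sets M" "2 \<le> card (S \<inter> C)"
  shows "\<exists>x\<in>S \<inter> C. ereal x < sba_bary M C a" "\<exists>y\<in>S \<inter> C. sba_bary M C a < ereal y"
proof -
  let ?X = "S \<inter> C"
  have ne: "?X \<noteq> {}"
    using assms(2) by auto
  have fin: "finite ?X"
    using finite_S by simp
  have w: "\<And>x. x \<in> ?X \<Longrightarrow> prob {x} > 0"
    using prob_atom_pos by blast
  show "\<exists>x\<in>S \<inter> C. ereal x < sba_bary M C a" "\<exists>y\<in>S \<inter> C. sba_bary M C a < ereal y"
    using Min_in[OF fin ne] Max_in[OF fin ne]
      weighted_mean_bounds(3,4)[where w="\<lambda>x. prob {x}", OF fin ne w assms(2)]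
    unfolding sba_bary_eq_weighted_mean[OF assms(1) ne] by auto
qed

lemma sba_bary_single_atom:
  assumes "C \<in> sets M" "S \<inter> C = {x}"
  shows "sba_bary M C a = ereal x"
proof -
  have "prob {x} > 0"
    using assms(2) prob_atom_pos by blast
  then show ?thesis
    using sba_bary_eq_weighted_mean[OF assms(1), of a] assms(2) by simp
qed

lemma sba_bary_sba_cell_between:
  assumes "m 0 = Inf (ereal ` T)" "m i \<le> m (Suc i)"
  shows "m i \<le> sba_bary M (sba_cell T m (Suc i)) (m i) \<and>
         sba_bary M (sba_cell T m (Suc i)) (m i) \<le> m (Suc i)"
proof (rule sba_bary_between[OF sba_cell_in_sets assms(2)])
  fix x assume "x \<in> S \<inter> sba_cell T m (Suc i)"
  then show "m i \<le> ereal x \<and> ereal x \<le> m (Suc i)"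
    using mem_sba_cell_bounds[of m T x i] assms(1) by simp
qed

lemma sba_mono: "l < 2 ^ j \<Longrightarrow> sba M T j l \<le> sba M T j (Suc l)"
proof (induction j arbitrary: l)
  case 0
  have "T \<noteq> {}"
    using not_empty space_M by simp
  then show ?case
    by (simp add: Inf_le_Sup)
next
  case (Suc j)
  define i where "i = l div 2"
  have "i < 2 ^ j"
    using Suc.prems unfolding i_def by simp
  note between = sba_bary_sba_cell_between[OF sba_first Suc.IH[OF this]]
  have "l = 2 * i \<or> l = Suc (2 * i)"
    unfolding i_def by presburger
  then consider "l = 2 * i" | "l = Suc (2 * i)"
    by blast
  then show ?case
  proof cases
    case 1
    then show ?thesis
      using between by simp
  next
    case 2
    then show ?thesis
      using between by simp
  qed
qed

lemma card_atoms_sba_cell_Suc: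
  assumes "i < 2 ^ j" "l \<in> {Suc (2 * i), Suc (Suc (2 * i))}"
  shows "card (S \<inter> sba_cell T (sba M T (Suc j)) l)
           \<le> max 1 (card (S \<inter> sba_cell T (sba M T j) (Suc i)) - 1)"
proof -
  let ?m = "sba M T j" and ?m' = "sba M T (Suc j)"
  let ?C = "sba_cell T ?m (Suc i)" and ?b = "?m' (Suc (2 * i))"
  have b: "?m i \<le> ?b" "?b \<le> ?m (Suc i)"
    using sba_bary_sba_cell_between[OF sba_first sba_mono[OF assms(1)]] by simp_all
  have "?m' (2 * i) = ?m i" "?m' (Suc (Suc (2 * i))) = ?m (Suc i)"
    by simp_all
  note split = sba_cell_split[where T = T, OF this b]
  show ?thesis
  proof (rule card_le_max_1_if_loses_element)
    show "finite (S \<inter> ?C)"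
      using finite_S by simp
    show "S \<inter> sba_cell T ?m' l \<subseteq> S \<inter> ?C"
      using assms(2) split by blast
    assume "2 \<le> card (S \<inter> ?C)"
    from sba_bary_splits_atoms[OF sba_cell_in_sets this, of "?m i"]
    obtain lo hi where "lo \<in> S \<inter> ?C" "ereal lo < ?b" "hi \<in> S \<inter> ?C" "?b < ereal hi"
      by (auto simp only: sba_Suc_odd)
    then show "\<exists>x\<in>S \<inter> ?C. x \<notin> S \<inter> sba_cell T ?m' l"
      using assms(2) split by (auto simp: not_le not_less simp del: sba.simps)
  qed
qed

lemma card_atoms_sba_cell:
  "l \<in> {1..2 ^ j} \<Longrightarrow> card (S \<inter> sba_cell T (sba M T j) l) \<le> max 1 (card S - j)"
proof (induction j arbitrary: l)
  case 0
  then have "l = 1"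
    by simp
  moreover have "S \<inter> sba_cell T (sba M T 0) 1 = S"
    using S_subset by (auto simp: sba_cell_def intro: Sup_upper)
  ultimately show ?case
    by (simp del: sba.simps)
next
  case (Suc j)
  define i where "i = (l - 1) div 2"
  have "l - 1 < 2 * 2 ^ j"
    using Suc.prems by auto
  then have i: "i < 2 ^ j"
    unfolding i_def by (simp add: less_mult_imp_div_less)
  have "l - 1 = 2 * i \<or> l - 1 = Suc (2 * i)"
    unfolding i_def by presburger
  then have "l \<in> {Suc (2 * i), Suc (Suc (2 * i))}"
    using Suc.prems by auto
  then have "card (S \<inter> sba_cell T (sba M T (Suc j)) l)
      \<le> max 1 (card (S \<inter> sba_cell T (sba M T j) (Suc i)) - 1)"
    by (rule card_atoms_sba_cell_Suc[OF i])
  also have "\<dots> \<le> max 1 (max 1 (card S - j) - 1)"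
    using Suc.IH[of "Suc i"] i by simp
  also have "\<dots> \<le> max 1 (card S - Suc j)"
    by simp
  finally show ?case .
qed

lemma prob_sba_cell_Int_partition:
  assumes "A \<in> sets M"
  shows "(\<Sum>l=1..2 ^ n. prob (sba_cell T (sba M T n) l \<inter> A)) = prob A"
proof -
  let ?C = "sba_cell T (sba M T n)"
  have "?C l \<inter> A \<inter> space M = ?C l \<inter> A" for l
    using sets.sets_into_space[OF assms] by blast
  then have "(\<Sum>l=1..2 ^ n. prob (?C l \<inter> A))
      = (\<Sum>l=1..2 ^ n. \<integral>\<theta>. indicator (?C l \<inter> A) \<theta> \<partial>M)"
    by simp
  also have "\<dots> = (\<integral>\<theta>. (\<Sum>l=1..2 ^ n. indicator (?C l \<inter> A) \<theta>) \<partial>M)"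
    using assms sba_cell_in_sets
    by (subst Bochner_Integration.integral_sum) (auto simp: less_top[symmetric])
  also have "\<dots> = (\<integral>\<theta>. indicator A \<theta> \<partial>M)"
  proof (intro Bochner_Integration.integral_cong refl)
    fix \<theta> assume "\<theta> \<in> space M"
    then have "(\<Sum>l=1..2 ^ n. indicator (?C l) \<theta>) = (1 :: real)"
      using sum_indicator_sba_cell[of "2 ^ n" "sba M T n" \<theta>] sba_mono space_M
      by (simp add: sba_last Sup_upper)
    then show "(\<Sum>l=1..2 ^ n. indicator (?C l \<inter> A) \<theta>) = (indicator A \<theta> :: real)"
      by (simp add: indicator_inter_arith sum_distrib_right[symmetric])
  qed
  also have "\<dots> = prob A"
    using assms sets.sets_into_space by (simp add: Int_absorb2)
  finally show ?thesis .
qed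

lemma prob_times_indicator_sba_bary:
  assumes C: "C \<in> sets M" and A: "A \<in> sets M" and "card (S \<inter> C) \<le> 1"
  shows "prob C * indicator (ereal ` A) (sba_bary M C a) = prob (C \<inter> A)"
proof (cases "S \<inter> C = {}")
  case True
  then have "S \<inter> (C \<inter> A) = {}"
    by blast
  then show ?thesis
    using True prob_eq_sum_atoms[OF C] prob_eq_sum_atoms[OF sets.Int[OF C A]] by simp
next
  case False
  then have "card (S \<inter> C) = 1"
    using assms(3) finite_S by (simp add: le_Suc_eq)
  then obtain x where x: "S \<inter> C = {x}"
    by (rule card_1_singletonE)
  then have "S \<inter> (C \<inter> A) = (if x \<in> A then {x} else {})"
    by auto
  then show ?thesis
    using prob_eq_sum_atoms[OF C] prob_eq_sum_atoms[OF sets.Int[OF C A]] x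
    by (simp add: sba_bary_single_atom[OF C x] indicator_def image_iff)
qed

lemma sba_approx_eq_prob:
  assumes "card S \<le> n" "A \<in> sets M"
  shows "sba_approx M T n A = prob A"
proof -
  have "sba_approx M T n A = (\<Sum>l=1..2 ^ n. prob (sba_cell T (sba M T n) l \<inter> A))"
    unfolding sba_approx_def
  proof (intro sum.cong refl)
    fix l :: nat assume l: "l \<in> {1..2 ^ n}"
    then have "sba M T (Suc n) (2 * l - 1)
        = sba_bary M (sba_cell T (sba M T n) l) (sba M T n (l - 1))"
      by (cases l) auto
    moreover have "card (S \<inter> sba_cell T (sba M T n) l) \<le> 1"
      using card_atoms_sba_cell[OF l] assms(1) by simp
    ultimately show "prob (sba_cell T (sba M T n) l)
          * indicator (ereal ` A) (sba M T (Suc n) (2 * l - 1))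
        = prob (sba_cell T (sba M T n) l \<inter> A)"
      using assms(2) sba_cell_in_sets by (simp add: prob_times_indicator_sba_bary)
  qed
  also have "\<dots> = prob A"
    using assms(2) by (rule prob_sba_cell_Int_partition)
  finally show ?thesis .
qed

end

theorem theorem1:
  fixes M :: "real measure" and T :: "real set" and S :: "real set" and k :: nat
  assumes "admissible_domain T"
    and "prob_space M"
    and "sets M = sets (restrict_space borel T)"
    and "finite S" and "card S = k" and "k \<ge> 1" and "S \<subseteq> T"
    and "measure M S = 1"
    and "\<forall>x\<in>S. measure M {x} > 0"
  shows "\<forall>n\<ge>k. \<forall>A\<in>sets M. sba_approx M T n A = measure M A"
proof -
  interpret finite_atomic_prob M T S
    using assms by (simp add: finite_atomic_prob_def finite_atomic_prob_axioms_def)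
  show ?thesis
    using sba_approx_eq_prob assms(5) by blast
qed

end
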